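(* Let $\Omega\subset\mathbb{C}^n$ be an open connected subset and $f_m\colon\Omega\to\mathbb{C}^n$ ($m\in\mathbb{N}$) holomorphic maps converging locally uniformly to $\mathrm{id}|_\Omega$. Let $D>0$ be an integer and $\Omega'\subset\Omega$ a non-empty open relatively compact subset such that $(f_m)^i(\overline{\Omega'})\subseteq\Omega$ for $i=1,\dots,D$ and all $m$, and $(f_m)^D=\mathrm{id}$ on $\Omega'$ for all $m$. Let, for $m\gg0$, $B_m\subset\Omega'$ be a non-empty compact convex subset with $f_m(B_m)=B_m$. Then for every $m\gg0$ there is a fixed point $P_m=f_m(P_m)\in B_m$ of $f_m$, and these satisfy $Df_m(P_m)=\mathrm{id}$ for $m\gg0$.
   Context: $Df_m(P)$ denotes the complex derivative (Jacobian matrix) of $f_m$ at $P$. *)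

theory Defs
  imports "HOL-Analysis.Analysis"
begin

text \<open>Holomorphic maps between open subsets of complex n-space: at every point the
  (real) Frechet derivative exists and is complex-linear, i.e. given by a complex
  n x n matrix (the complex Jacobian).\<close>
definition holomorphic_on_n ::
  "(complex ^ 'n \<Rightarrow> complex ^ 'm) \<Rightarrow> (complex ^ 'n) set \<Rightarrow> bool" where
  "holomorphic_on_n f S \<longleftrightarrow>
     (\<forall>z\<in>S. \<exists>A :: complex ^ 'n ^ 'm. (f has_derivative (\<lambda>h. A *v h)) (at z))"

definition locally_uniform_limit ::
  "'a::topological_space set \<Rightarrow> (nat \<Rightarrow> 'a \<Rightarrow> 'b::metric_space) \<Rightarrow> ('a \<Rightarrow> 'b) \<Rightarrow> bool" where
  "locally_uniform_limit S f g \<longleftrightarrow>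
     (\<forall>x\<in>S. \<exists>U. open U \<and> x \<in> U \<and> U \<subseteq> S \<and> uniform_limit U f g sequentially)"

end

theory Submission
  imports Defs "HOL-Complex_Analysis.Cauchy_Integral_Formula"
begin

text \<open>
  Brouwer's theorem provides the fixed points. At a fixed point P of \<open>f m\<close> the derivative
  L satisfies \<open>L ^^ D = id\<close>, because \<open>f m ^^ D\<close> is the identity on the open set \<open>\<Omega>'\<close>
  containing P. Cauchy's inequality on the complex lines through P bounds \<open>norm (L v - v)\<close>
  by a multiple of the supremum of \<open>norm (f m x - x)\<close> on a ball of fixed radius around P;
  these balls lie in one compact subset of \<open>\<Omega>\<close>, so the bound tends to 0. Finally, a
  linear map of finite order D that is close enough to the identity is the identity.

  The maps are total.
\<close>

lemma locally_uniform_limit_imp_uniform_limit_compact: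
  assumes "locally_uniform_limit S f g" "compact K" "K \<subseteq> S"
  shows "uniform_limit K f g sequentially"
proof -
  have "\<forall>x\<in>K. \<exists>U. open U \<and> x \<in> U \<and> uniform_limit U f g sequentially"
    using assms(1,3) unfolding locally_uniform_limit_def by blast
  then obtain U
    where U: "\<And>x. x \<in> K \<Longrightarrow> open (U x) \<and> x \<in> U x \<and> uniform_limit (U x) f g sequentially"
    by metis
  then have "K \<subseteq> (\<Union>x\<in>K. U x)" by blast
  then obtain F where F: "F \<subseteq> K" "finite F" "K \<subseteq> (\<Union>x\<in>F. U x)"
    using compactE_image[OF assms(2), of K U] U by metis
  have "uniform_limit (\<Union>x\<in>F. U x) f g sequentially"
    by (rule uniform_limit_on_Union) (use F U in auto)
  then show ?thesis using F(3) uniform_limit_on_subset by blast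
qed

lemma compact_cball_neighbourhood_in_open:
  fixes K :: "'a::{real_normed_vector, heine_borel} set"
  assumes "compact K" "open S" "K \<subseteq> S"
  obtains \<delta> T where "\<delta> > 0" "compact T" "T \<subseteq> S" "\<And>x. x \<in> K \<Longrightarrow> cball x \<delta> \<subseteq> T"
proof -
  obtain \<delta> where "\<delta> > 0" and \<delta>: "(\<Union>x\<in>K. cball x \<delta>) \<subseteq> S"
    using compact_subset_open_imp_cball_epsilon_subset[OF assms] .
  have thickening: "(\<Union>x\<in>K. cball x \<delta>) = {x + y | x y. x \<in> K \<and> y \<in> cball 0 \<delta>}"
  proof (intro equalityI subsetI)
    fix z assume "z \<in> (\<Union>x\<in>K. cball x \<delta>)"
    then obtain x where "x \<in> K" "dist x z \<le> \<delta>" by auto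
    then show "z \<in> {x + y | x y. x \<in> K \<and> y \<in> cball 0 \<delta>}"
      by (intro CollectI exI[of _ x] exI[of _ "z - x"]) (simp add: dist_norm)
  next
    fix z assume "z \<in> {x + y | x y. x \<in> K \<and> y \<in> cball 0 \<delta>}"
    then obtain x y where "z = x + y" "x \<in> K" "norm y \<le> \<delta>" by auto
    then show "z \<in> (\<Union>x\<in>K. cball x \<delta>)" by (intro UN_I[of x]) (auto simp: dist_norm)
  qed
  have "compact (\<Union>x\<in>K. cball x \<delta>)"
    unfolding thickening by (rule compact_sums[OF assms(1) compact_cball])
  with \<open>\<delta> > 0\<close> \<delta> show ?thesis using that by blast
qed

lemma norm_vector_scalar_mult:
  fixes v :: "'a::real_normed_field ^ 'n"
  shows "norm (s *s v) = norm s * norm v"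
  unfolding norm_vec_def by (simp add: L2_set_right_distrib norm_mult)

lemma bounded_linear_vector_scalar_mult_left:
  fixes v :: "'a::real_normed_field ^ 'n"
  shows "bounded_linear (\<lambda>s. s *s v)"
proof (rule bounded_linear_intro[where K="norm v"])
  show "(x + y) *s v = x *s v + y *s v" for x y by (simp add: vec_eq_iff algebra_simps)
  show "(r *\<^sub>R x) *s v = r *\<^sub>R (x *s v)" for r x by (simp add: vec_eq_iff)
  show "norm (x *s v) \<le> norm x * norm v" for x by (simp add: norm_vector_scalar_mult)
qed

lemma has_field_derivative_component_along_line:
  fixes g :: "complex ^ 'n \<Rightarrow> complex ^ 'm" and A :: "complex ^ 'n ^ 'm"
  assumes "(g has_derivative (\<lambda>h. A *v h)) (at (P + t *s v))"
  shows "((\<lambda>t. g (P + t *s v) $ k) has_field_derivative (A *v v) $ k) (at t)"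
proof -
  have line: "((\<lambda>t. P + t *s v) has_derivative (\<lambda>s. s *s v)) (at t)"
    using has_derivative_add[OF has_derivative_const
        bounded_linear_imp_has_derivative[OF bounded_linear_vector_scalar_mult_left], of P v]
    by simp
  have "((\<lambda>t. g (P + t *s v) $ k) has_derivative (\<lambda>s. (A *v (s *s v)) $ k)) (at t)"
    using bounded_linear.has_derivative[OF bounded_linear_vec_nth diff_chain_at[OF line assms]]
    by (simp add: o_def)
  moreover have "(\<lambda>s. (A *v (s *s v)) $ k) = (\<lambda>s. (A *v v) $ k * s)"
    by (simp add: vector_scalar_commute mult.commute)
  ultimately show ?thesis by (simp add: has_field_derivative_def)
qed

lemma holomorphic_on_n_derivative_bound:
  fixes g :: "complex ^ 'n \<Rightarrow> complex ^ 'm" and A :: "complex ^ 'n ^ 'm"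
  assumes hol: "holomorphic_on_n g (cball P \<delta>)" and "\<delta> > 0"
    and bound: "\<And>x. x \<in> cball P \<delta> \<Longrightarrow> norm (g x) \<le> \<epsilon>"
    and deriv: "(g has_derivative (\<lambda>h. A *v h)) (at P)"
  shows "norm (A *v v) \<le> real CARD('m) * \<epsilon> / \<delta> * norm v"
proof (cases "v = 0")
  case True
  then show ?thesis by simp
next
  case False
  define r where "r = \<delta> / norm v"
  have "r > 0" using False \<open>\<delta> > 0\<close> by (simp add: r_def)
  have line_in_ball: "P + t *s v \<in> cball P \<delta>" if "norm t \<le> r" for t
  proof -
    have "norm t * norm v \<le> \<delta>" using that False by (simp add: r_def field_simps)
    then show ?thesis by (simp add: dist_norm norm_vector_scalar_mult)
  qed
  have component: "norm ((A *v v) $ k) \<le> \<epsilon> / r" for k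
  proof -
    define h where "h t = g (P + t *s v) $ k" for t
    have h_diff: "h field_differentiable (at t)" if t: "norm t \<le> r" for t
    proof -
      obtain B :: "complex ^ 'n ^ 'm" where "(g has_derivative (\<lambda>h. B *v h)) (at (P + t *s v))"
        using hol line_in_ball[OF t] unfolding holomorphic_on_n_def by blast
      then show ?thesis unfolding h_def field_differentiable_def
        by (blast intro: has_field_derivative_component_along_line)
    qed
    have "norm ((deriv ^^ 1) h 0) \<le> fact 1 * \<epsilon> / r ^ 1"
    proof (rule Cauchy_inequality[OF _ _ \<open>r > 0\<close>])
      show "h holomorphic_on ball 0 r"
        using h_diff by (simp add: holomorphic_on_def field_differentiable_at_within)
      show "continuous_on (cball 0 r) h"
        using h_diff by (intro continuous_at_imp_continuous_on)
          (simp add: field_differentiable_imp_continuous_at)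
      show "norm (h t) \<le> \<epsilon>" if "norm (0 - t) = r" for t
        using Finite_Cartesian_Product.norm_nth_le[of "g (P + t *s v)" k] bound[OF line_in_ball] that
        unfolding h_def by force
    qed
    moreover have "(h has_field_derivative (A *v v) $ k) (at 0)"
      unfolding h_def by (rule has_field_derivative_component_along_line) (simp add: deriv)
    ultimately show ?thesis by (simp add: DERIV_imp_deriv)
  qed
  have "norm (A *v v) \<le> (\<Sum>k\<in>UNIV. norm ((A *v v) $ k))"
    unfolding norm_vec_def by (rule L2_set_le_sum) simp
  also have "\<dots> \<le> (\<Sum>k\<in>(UNIV::'m set). \<epsilon> / r)"
    by (rule sum_mono) (rule component)
  also have "\<dots> = real CARD('m) * \<epsilon> / \<delta> * norm v"
    using False by (simp add: r_def)
  finally show ?thesis .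
qed

lemma has_derivative_minus_id_matrix:
  fixes A :: "'a::real_normed_field ^ 'n ^ 'n"
  assumes "(f has_derivative (\<lambda>h. A *v h)) F"
  shows "((\<lambda>x. f x - x) has_derivative (\<lambda>h. (A - mat 1) *v h)) F"
  using has_derivative_diff[OF assms has_derivative_ident]
  by (simp add: matrix_vector_mult_diff_rdistrib)

lemma holomorphic_on_n_imp_continuous_on:
  "holomorphic_on_n f S \<Longrightarrow> continuous_on S f"
  unfolding holomorphic_on_n_def
  by (meson continuous_at_imp_continuous_on has_derivative_continuous)

lemma has_derivative_funpow_at_fixed_point:
  assumes "(f has_derivative L) (at P)" "f P = P"
  shows "((f ^^ i) has_derivative (L ^^ i)) (at P)"
proof (induction i)
  case 0
  show ?case by (simp add: id_def)
next
  case (Suc i)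
  have "(f ^^ i) P = P" using assms(2) by (induction i) simp_all
  then show ?case using diff_chain_at[OF Suc, of f L] assms(1) by (simp add: o_def)
qed

lemma linear_funpow:
  fixes L :: "'a::real_vector \<Rightarrow> 'a"
  assumes "linear L"
  shows "linear (L ^^ i)"
proof (induction i)
  case 0
  show ?case by (simp add: linear_iff)
next
  case (Suc i)
  then show ?case using linear_compose[OF Suc assms] by (simp add: o_def)
qed

lemma norm_funpow_diff_le:
  fixes L :: "'a::real_normed_vector \<Rightarrow> 'a"
  assumes "0 \<le> c" and near: "\<And>v. norm (L v - v) \<le> c * norm v"
  shows "norm ((L ^^ i) v - v) \<le> ((1 + c) ^ i - 1) * norm v"
proof (induction i)
  case 0
  show ?case by simp
next
  case (Suc i)
  let ?w = "(L ^^ i) v"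
  have "norm ?w \<le> (1 + c) ^ i * norm v"
    using Suc norm_triangle_ineq2[of ?w v] by (simp add: algebra_simps)
  then have "norm (L ?w - ?w) \<le> c * ((1 + c) ^ i * norm v)"
    using near[of ?w] \<open>0 \<le> c\<close> by (meson mult_left_mono order_trans)
  then show ?case
    using Suc norm_triangle_ineq[of "L ?w - ?w" "?w - v"] by (simp add: algebra_simps)
qed

lemma linear_finite_order_near_id:
  fixes L :: "'a::real_normed_vector \<Rightarrow> 'a"
  assumes "linear L" "D > 0" "L ^^ D = id"
    and "0 \<le> c" "(1 + c) ^ D < 2" and near: "\<And>v. norm (L v - v) \<le> c * norm v"
  shows "L = id"
proof
  fix v
  define w where "w = L v - v"
  \<comment> \<open>The orbit of w telescopes to L^D v - v = 0, while each of its D terms is close to w.\<close>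
  have "(\<Sum>i<D. (L ^^ i) w) = (\<Sum>i<D. (L ^^ Suc i) v - (L ^^ i) v)"
    by (simp add: w_def linear_diff[OF linear_funpow[OF assms(1)]] funpow_swap1)
  also have "\<dots> = (L ^^ D) v - (L ^^ 0) v" by (rule sum_lessThan_telescope)
  also have "\<dots> = 0" using assms(3) by simp
  finally have "real D *\<^sub>R w = (\<Sum>i<D. w - (L ^^ i) w)"
    by (simp add: sum_subtractf sum_constant_scaleR)
  then have "real D * norm w = norm (\<Sum>i<D. w - (L ^^ i) w)"
    by (metis abs_of_nat norm_scaleR)
  also have "\<dots> \<le> (\<Sum>i<D. norm (w - (L ^^ i) w))" by (rule norm_sum)
  also have "\<dots> \<le> (\<Sum>i<D. ((1 + c) ^ D - 1) * norm w)"
  proof (rule sum_mono)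
    fix i assume "i \<in> {..<D}"
    then have "(1 + c) ^ i \<le> (1 + c) ^ D" using \<open>0 \<le> c\<close> by (intro power_increasing) auto
    then have "((1 + c) ^ i - 1) * norm w \<le> ((1 + c) ^ D - 1) * norm w"
      by (intro mult_right_mono) auto
    then show "norm (w - (L ^^ i) w) \<le> ((1 + c) ^ D - 1) * norm w"
      using norm_funpow_diff_le[OF \<open>0 \<le> c\<close> near, of i w] by (simp add: norm_minus_commute)
  qed
  also have "\<dots> = real D * (((1 + c) ^ D - 1) * norm w)" by simp
  finally have "norm w \<le> ((1 + c) ^ D - 1) * norm w"
    using \<open>D > 0\<close> by simp
  then have "(2 - (1 + c) ^ D) * norm w \<le> 0" by (simp add: algebra_simps)
  then have "norm w = 0"
    using \<open>(1 + c) ^ D < 2\<close> by (simp add: mult_le_0_iff)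
  then show "L v = id v" by (simp add: w_def)
qed

lemma holomorphic_on_n_fixed_point:
  assumes "holomorphic_on_n f S" "B \<subseteq> S" "compact B" "convex B" "B \<noteq> {}" "f ` B \<subseteq> B"
  shows "\<exists>P\<in>B. f P = P"
proof -
  have "continuous_on B f"
    using holomorphic_on_n_imp_continuous_on[OF assms(1)] assms(2) by (rule continuous_on_subset)
  then show ?thesis using brouwer[of B f] assms(3-6) by blast
qed

lemma periodic_near_id_has_derivative_id_at_fixed_point:
  fixes f :: "complex ^ 'n \<Rightarrow> complex ^ 'n"
  assumes hol: "holomorphic_on_n f (cball P \<delta>)" and "\<delta> > 0"
    and near: "\<And>x. x \<in> cball P \<delta> \<Longrightarrow> norm (f x - x) \<le> \<epsilon>"
    and "open U" "P \<in> U" and periodic: "\<And>x. x \<in> U \<Longrightarrow> (f ^^ D) x = x"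
    and "f P = P" "D > 0" and small: "(1 + real CARD('n) * \<epsilon> / \<delta>) ^ D < 2"
  shows "(f has_derivative (\<lambda>h. h)) (at P)"
proof -
  obtain A :: "complex ^ 'n ^ 'n" where A: "(f has_derivative (\<lambda>h. A *v h)) (at P)"
    using hol \<open>\<delta> > 0\<close> unfolding holomorphic_on_n_def by (meson centre_in_cball less_imp_le)
  have "((f ^^ D) has_derivative (\<lambda>h. A *v h) ^^ D) (at P)"
    by (rule has_derivative_funpow_at_fixed_point[OF A \<open>f P = P\<close>])
  moreover have "((f ^^ D) has_derivative id) (at P)"
    by (rule has_derivative_transform_within_open[OF has_derivative_id \<open>open U\<close> \<open>P \<in> U\<close>])
      (simp add: periodic)
  ultimately have periodic_derivative: "(\<lambda>h. A *v h) ^^ D = id"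
    by (rule has_derivative_unique)
  have "holomorphic_on_n (\<lambda>x. f x - x) (cball P \<delta>)"
    using hol has_derivative_minus_id_matrix unfolding holomorphic_on_n_def by blast
  then have "norm ((A - mat 1) *v v) \<le> real CARD('n) * \<epsilon> / \<delta> * norm v" for v
    using \<open>\<delta> > 0\<close> near has_derivative_minus_id_matrix[OF A]
    by (rule holomorphic_on_n_derivative_bound)
  then have near_id: "norm (A *v v - v) \<le> real CARD('n) * \<epsilon> / \<delta> * norm v" for v
    by (simp add: matrix_vector_mult_diff_rdistrib)
  have "0 \<le> \<epsilon>"
    using order_trans[OF norm_ge_zero near[of P]] \<open>\<delta> > 0\<close> by simp
  then have "0 \<le> real CARD('n) * \<epsilon> / \<delta>"
    using \<open>\<delta> > 0\<close> by simp
  then have "(\<lambda>h. A *v h) = id"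
    by (rule linear_finite_order_near_id[OF has_derivative_linear[OF A] \<open>D > 0\<close> periodic_derivative
          _ small near_id])
  then show ?thesis using A by (simp add: id_def)
qed

theorem lemma3p10:
  fixes \<Omega> \<Omega>' :: "(complex ^ 'n) set"
    and f :: "nat \<Rightarrow> complex ^ 'n \<Rightarrow> complex ^ 'n"
    and B :: "nat \<Rightarrow> (complex ^ 'n) set"
    and D :: nat
  assumes "open \<Omega>" and "connected \<Omega>"
    and "\<And>m. holomorphic_on_n (f m) \<Omega>"
    and "locally_uniform_limit \<Omega> f id"
    and "D > 0"
    and "open \<Omega>'" and "\<Omega>' \<noteq> {}" and "\<Omega>' \<subseteq> \<Omega>"
    and "compact (closure \<Omega>')" and "closure \<Omega>' \<subseteq> \<Omega>"
    and "\<And>m i. 1 \<le> i \<Longrightarrow> i \<le> D \<Longrightarrow> (f m ^^ i) ` closure \<Omega>' \<subseteq> \<Omega>"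
    and "\<And>m x. x \<in> \<Omega>' \<Longrightarrow> (f m ^^ D) x = x"
    and "\<exists>M. \<forall>m\<ge>M. B m \<noteq> {} \<and> compact (B m) \<and> convex (B m) \<and> B m \<subseteq> \<Omega>'
                   \<and> f m ` B m = B m"
  shows "\<exists>M. \<forall>m\<ge>M. (\<exists>P\<in>B m. f m P = P) \<and>
           (\<forall>P\<in>B m. f m P = P \<longrightarrow> (f m has_derivative (\<lambda>h. h)) (at P))"
proof -
  obtain \<delta> T where "\<delta> > 0" "compact T" "T \<subseteq> \<Omega>"
    and cball_T: "\<And>x. x \<in> closure \<Omega>' \<Longrightarrow> cball x \<delta> \<subseteq> T"
    using compact_cball_neighbourhood_in_open[OF assms(9,1,10)] by blast
  have "\<forall>\<^sub>F \<epsilon> in at_right 0. 0 < \<epsilon> \<and> (1 + real CARD('n) * \<epsilon> / \<delta>) ^ D < 2"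
    by (intro eventually_conj eventually_at_right_less
        order_tendstoD(2)[of _ "(1 + real CARD('n) * 0 / \<delta>) ^ D"])
      (use \<open>\<delta> > 0\<close> in \<open>auto intro!: tendsto_eq_intros\<close>)
  then obtain \<epsilon> where "\<epsilon> > 0" and small: "(1 + real CARD('n) * \<epsilon> / \<delta>) ^ D < 2"
    using eventually_happens'[OF trivial_limit_at_right_real] by blast
  have "uniform_limit T f id sequentially"
    using locally_uniform_limit_imp_uniform_limit_compact[OF assms(4)] \<open>compact T\<close> \<open>T \<subseteq> \<Omega>\<close>
    by blast
  then have "\<forall>\<^sub>F m in sequentially. \<forall>x\<in>T. norm (f m x - x) \<le> \<epsilon>"
    using \<open>\<epsilon> > 0\<close> unfolding uniform_limit_iff by (force simp: dist_norm elim: eventually_mono)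
  moreover have "\<forall>\<^sub>F m in sequentially. B m \<noteq> {} \<and> compact (B m) \<and> convex (B m) \<and> B m \<subseteq> \<Omega>'
                   \<and> f m ` B m = B m"
    using assms(13) by (simp add: eventually_sequentially)
  ultimately have "\<forall>\<^sub>F m in sequentially. (\<exists>P\<in>B m. f m P = P) \<and>
           (\<forall>P\<in>B m. f m P = P \<longrightarrow> (f m has_derivative (\<lambda>h. h)) (at P))"
  proof eventually_elim
    case (elim m)
    then have "\<exists>P\<in>B m. f m P = P"
      by (intro holomorphic_on_n_fixed_point[OF assms(3)]) (use assms(8) in auto)
    moreover have "(f m has_derivative (\<lambda>h. h)) (at P)" if "P \<in> B m" "f m P = P" for P
    proof (rule periodic_near_id_has_derivative_id_at_fixed_point[where U = "\<Omega>'"])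
      have "cball P \<delta> \<subseteq> T" using that elim cball_T closure_subset by blast
      then show "holomorphic_on_n (f m) (cball P \<delta>)"
        and "\<And>x. x \<in> cball P \<delta> \<Longrightarrow> norm (f m x - x) \<le> \<epsilon>"
        using assms(3) elim \<open>T \<subseteq> \<Omega>\<close> unfolding holomorphic_on_n_def by blast+
    qed (use that elim assms(5,6,12) \<open>\<delta> > 0\<close> small in auto)
    ultimately show ?case by blast
  qed
  then show ?thesis by (simp add: eventually_sequentially)
qed

end
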